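(* Let $\mathbb{X}$ be a finite-dimensional Banach space and $n\in\mathbb{N}$. Let $T\in\mathbb{L}(\mathbb{X},\ell_\infty^n)$ with $\|T\|=1$. Then $T$ is $k$-smooth if and only if $M_{T^*}\cap\operatorname{Ext}(B_{\ell_1^n})=\{\pm e_1,\pm e_2,\ldots,\pm e_r\}$ for some $1\leq r\leq n$, $T^*e_i$ is $m_i$-smooth in $\mathbb{X}^*$ for each $1\leq i\leq r$, and $m_1+m_2+\cdots+m_r=k$.
   Context: The dual of $\ell_\infty^n$ is identified with $\ell_1^n$, so the adjoint is $T^*\in\mathbb{L}(\ell_1^n,\mathbb{X}^* )$; $e_1,\ldots,e_n$ is the standard basis of $\ell_1^n$. $B_{\ell_1^n}$ is the closed unit ball and $\operatorname{Ext}$ denotes its extreme points. For an operator $S$, $M_S=\{x:\|x\|=1,\ \|Sx\|=\|S\|\}$. For a Banach space $\mathbb{Z}$ and a unit vector $z$, $J(z)=\{f\in \mathbb{Z}^*:\|f\|=1,\ f(z)=1\}$; $z$ is $k$-smooth if $\dim\operatorname{span} J(z)=k$ (for $T$, in the space $\mathbb{L}(\mathbb{X},\ell_\infty^n)$ with operator norm). *)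

theory Defs
  imports "HOL-Analysis.Analysis"
begin

section \<open>The spaces ell_infinity^n and ell_1^n (index type 'n, n = CARD('n))\<close>

typedef ('n::finite) linf = "UNIV :: ('n \<Rightarrow> real) set" by simp
typedef ('n::finite) lone = "UNIV :: ('n \<Rightarrow> real) set" by simp

setup_lifting type_definition_linf
setup_lifting type_definition_lone

instantiation linf :: (finite) real_vector
begin
lift_definition zero_linf :: "'a linf" is "\<lambda>i. 0" .
lift_definition plus_linf :: "'a linf \<Rightarrow> 'a linf \<Rightarrow> 'a linf" is "\<lambda>x y i. x i + y i" .
lift_definition minus_linf :: "'a linf \<Rightarrow> 'a linf \<Rightarrow> 'a linf" is "\<lambda>x y i. x i - y i" .
lift_definition uminus_linf :: "'a linf \<Rightarrow> 'a linf" is "\<lambda>x i. - x i" .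
lift_definition scaleR_linf :: "real \<Rightarrow> 'a linf \<Rightarrow> 'a linf" is "\<lambda>c x i. c * x i" .
instance
  by standard (transfer; auto simp: algebra_simps fun_eq_iff)+
end

instantiation lone :: (finite) real_vector
begin
lift_definition zero_lone :: "'a lone" is "\<lambda>i. 0" .
lift_definition plus_lone :: "'a lone \<Rightarrow> 'a lone \<Rightarrow> 'a lone" is "\<lambda>x y i. x i + y i" .
lift_definition minus_lone :: "'a lone \<Rightarrow> 'a lone \<Rightarrow> 'a lone" is "\<lambda>x y i. x i - y i" .
lift_definition uminus_lone :: "'a lone \<Rightarrow> 'a lone" is "\<lambda>x i. - x i" .
lift_definition scaleR_lone :: "real \<Rightarrow> 'a lone \<Rightarrow> 'a lone" is "\<lambda>c x i. c * x i" .
instance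
  by standard (transfer; auto simp: algebra_simps fun_eq_iff)+
end

lemma linf_norm_aux:
  fixes x y :: "'n::finite \<Rightarrow> real"
  shows "Max (range (\<lambda>i. \<bar>x i + y i\<bar>)) \<le> Max (range (\<lambda>i. \<bar>x i\<bar>)) + Max (range (\<lambda>i. \<bar>y i\<bar>))"
proof -
  have "\<bar>x i + y i\<bar> \<le> Max (range (\<lambda>i. \<bar>x i\<bar>)) + Max (range (\<lambda>i. \<bar>y i\<bar>))" for i
  proof -
    have "\<bar>x i\<bar> \<le> Max (range (\<lambda>i. \<bar>x i\<bar>))" "\<bar>y i\<bar> \<le> Max (range (\<lambda>i. \<bar>y i\<bar>))"
      by (auto intro: Max_ge)
    then show ?thesis by linarith
  qed
  then show ?thesis by (auto intro: Max.boundedI)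
qed

lemma linf_norm_scale:
  fixes x :: "'n::finite \<Rightarrow> real"
  shows "Max (range (\<lambda>i. \<bar>c * x i\<bar>)) = \<bar>c\<bar> * Max (range (\<lambda>i. \<bar>x i\<bar>))"
proof -
  have "range (\<lambda>i. \<bar>c * x i\<bar>) = (\<lambda>t. \<bar>c\<bar> * t) ` range (\<lambda>i. \<bar>x i\<bar>)"
    by (auto simp: abs_mult)
  also have "Max \<dots> = \<bar>c\<bar> * Max (range (\<lambda>i. \<bar>x i\<bar>))"
    by (rule mono_Max_commute[symmetric]) (auto simp: mono_def mult_left_mono)
  finally show ?thesis .
qed

lemma linf_norm_zero:
  fixes x :: "'n::finite \<Rightarrow> real"
  shows "Max (range (\<lambda>i. \<bar>x i\<bar>)) = 0 \<longleftrightarrow> x = (\<lambda>i. 0)"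
proof
  assume h: "Max (range (\<lambda>i. \<bar>x i\<bar>)) = 0"
  have "\<bar>x i\<bar> \<le> 0" for i using Max_ge[of "range (\<lambda>i. \<bar>x i\<bar>)" "\<bar>x i\<bar>"] h by auto
  then show "x = (\<lambda>i. 0)" by (auto simp: fun_eq_iff)
qed simp

instantiation linf :: (finite) real_normed_vector
begin
lift_definition norm_linf :: "'a linf \<Rightarrow> real" is "\<lambda>x. Max (range (\<lambda>i. \<bar>x i\<bar>))" .
definition sgn_linf :: "'a linf \<Rightarrow> 'a linf" where "sgn_linf x = x /\<^sub>R norm x"
definition dist_linf :: "'a linf \<Rightarrow> 'a linf \<Rightarrow> real" where "dist_linf x y = norm (x - y)"
definition uniformity_linf :: "('a linf \<times> 'a linf) filter" where
  "uniformity_linf = (INF e\<in>{0<..}. principal {(x, y). dist x y < e})"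
definition open_linf :: "'a linf set \<Rightarrow> bool" where
  "open_linf U = (\<forall>x\<in>U. \<forall>\<^sub>F (x', y) in uniformity. x' = x \<longrightarrow> y \<in> U)"
instance
proof
  fix x y :: "'a linf" and a :: real
  show "norm (x + y) \<le> norm x + norm y" by transfer (rule linf_norm_aux)
  show "norm (a *\<^sub>R x) = \<bar>a\<bar> * norm x" by transfer (rule linf_norm_scale)
  show "(norm x = 0) = (x = 0)" by transfer (rule linf_norm_zero)
qed (simp_all add: sgn_linf_def dist_linf_def uniformity_linf_def open_linf_def)
end

instantiation lone :: (finite) real_normed_vector
begin
lift_definition norm_lone :: "'a lone \<Rightarrow> real" is "\<lambda>x. \<Sum>i\<in>UNIV. \<bar>x i\<bar>" .
definition sgn_lone :: "'a lone \<Rightarrow> 'a lone" where "sgn_lone x = x /\<^sub>R norm x"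
definition dist_lone :: "'a lone \<Rightarrow> 'a lone \<Rightarrow> real" where "dist_lone x y = norm (x - y)"
definition uniformity_lone :: "('a lone \<times> 'a lone) filter" where
  "uniformity_lone = (INF e\<in>{0<..}. principal {(x, y). dist x y < e})"
definition open_lone :: "'a lone set \<Rightarrow> bool" where
  "open_lone U = (\<forall>x\<in>U. \<forall>\<^sub>F (x', y) in uniformity. x' = x \<longrightarrow> y \<in> U)"
instance
proof
  fix x y :: "'a lone" and a :: real
  show "norm (x + y) \<le> norm x + norm y"
    by transfer (simp add: sum.distrib[symmetric] sum_mono abs_triangle_ineq)
  show "norm (a *\<^sub>R x) = \<bar>a\<bar> * norm x" by transfer (simp add: abs_mult sum_distrib_left)
  show "(norm x = 0) = (x = 0)" by transfer (simp add: sum_nonneg_eq_0_iff fun_eq_iff)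
qed (simp_all add: sgn_lone_def dist_lone_def uniformity_lone_def open_lone_def)
end

lift_definition unit_vec :: "'n::finite \<Rightarrow> 'n lone" is "\<lambda>i j. if j = i then 1 else 0" .

text \<open>Duality pairing ell_1^n x ell_infinity^n, identifying (ell_infinity^n)* with ell_1^n.\<close>
lift_definition pairing :: "'n::finite lone \<Rightarrow> 'n linf \<Rightarrow> real" is
  "\<lambda>y z. \<Sum>i\<in>UNIV. y i * z i" .

definition adjoint_op :: "('a::real_normed_vector \<Rightarrow>\<^sub>L 'n::finite linf) \<Rightarrow> ('n lone \<Rightarrow>\<^sub>L ('a \<Rightarrow>\<^sub>L real))"
  where "adjoint_op T = Blinfun (\<lambda>y. Blinfun (\<lambda>x. pairing y (blinfun_apply T x)))"

definition Jset :: "'b::real_normed_vector \<Rightarrow> ('b \<Rightarrow>\<^sub>L real) set" where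
  "Jset z = {f. norm f = 1 \<and> blinfun_apply f z = 1}"

definition k_smooth :: "'b::real_normed_vector \<Rightarrow> nat \<Rightarrow> bool" where
  "k_smooth z k \<longleftrightarrow> norm z = 1 \<and> dim (span (Jset z)) = k"

definition M_set :: "('a::real_normed_vector \<Rightarrow>\<^sub>L 'b::real_normed_vector) \<Rightarrow> 'a set" where
  "M_set S = {x. norm x = 1 \<and> norm (blinfun_apply S x) = norm S}"

end

theory Submission
  imports Defs
begin

text \<open>
  An operator T into ell_infinity^n is the tuple of its rows f_i = T^* e_i, and its norm is the
  largest norm of a row. Hence the extreme points \<plusminus>e_i of the unit ball of ell_1^n at which T^*
  attains its norm are those with norm f_i = 1.

  The dual of L(X, ell_infinity^n) is the ell_1-sum of n copies of X^**: every functional \<Psi>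
  splits as a sum of functionals \<phi>_i applied to the i-th row, with the norms of the \<phi>_i summing
  to at most the norm of \<Psi>. If \<Psi> supports T, this forces each \<phi>_i to attain its norm at f_i,
  so \<phi>_i is a multiple of a support functional of f_i; conversely, a support functional of a row
  of norm 1 composed with that row supports T. Thus span J(T) is the direct sum of the spaces
  span J(f_i), and their dimensions add up; rows of norm less than 1 have no support functionals.
\<close>

section \<open>Dual spaces and support functionals\<close>

lemma finite_dimensional_dual:
  fixes B :: "'v::real_normed_vector set"
  assumes "finite B" and "span B = UNIV"
  shows "\<exists>C. finite C \<and> span C = (UNIV :: ('v \<Rightarrow>\<^sub>L real) set)"
proof -
  obtain B0 where B0: "B0 \<subseteq> B" "independent B0" "B \<subseteq> span B0"
    by (rule maximal_independent_subset)
  have "finite B0" using B0(1) assms(1) finite_subset by blast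
  have span_B0: "span B0 = UNIV"
    using assms(2) span_mono[OF B0(3)] by (auto simp: span_span)
  \<comment> \<open>R records the values of a functional on the basis B0; it is injective since B0 spans.\<close>
  define R where "R g = (\<Sum>b\<in>B0. g b *\<^sub>R b)" for g :: "'v \<Rightarrow>\<^sub>L real"
  have "linear R"
    by (rule linearI) (simp_all add: R_def blinfun.add_left blinfun.scaleR_left scaleR_add_left
        sum.distrib scaleR_sum_right)
  have "inj R"
    unfolding linear_injective_0[OF \<open>linear R\<close>]
  proof (intro allI impI)
    fix g assume "R g = 0"
    then have "\<forall>b\<in>B0. g b = 0"
      using B0(2) \<open>finite B0\<close> by (auto simp: R_def dependent_finite)
    then have "g x = 0" for x
      using linear_eq_0_on_span[OF bounded_linear.linear[OF blinfun.bounded_linear_right], of B0 g x] span_B0 by auto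
    then show "g = 0" by (intro blinfun_eqI) simp
  qed
  obtain C where C: "independent C" "(UNIV :: ('v \<Rightarrow>\<^sub>L real) set) \<subseteq> span C"
    by (rule maximal_independent_subset[of UNIV]) auto
  have "independent (R ` C)"
    using linear_independent_injective_image[OF \<open>linear R\<close> C(1)] \<open>inj R\<close> inj_on_subset by blast
  then have "finite (R ` C)"
    using independent_span_bound[OF assms(1)] assms(2) by auto
  then have "finite C" using \<open>inj R\<close> by (simp add: finite_image_iff inj_on_subset)
  then show ?thesis using C by auto
qed

lemma linear_blinfun_compose_left: "linear (\<lambda>f. f o\<^sub>L L)"
  by (rule bounded_linear.linear[OF bounded_bilinear.bounded_linear_left[OF bounded_bilinear_blinfun_compose]])

lemma exists_almost_norming:
  fixes f :: "'v::real_normed_vector \<Rightarrow>\<^sub>L real"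
  assumes "0 < e"
  obtains x where "norm x \<le> 1" and "norm f - e \<le> f x"
proof -
  have "\<exists>x. norm x \<le> 1 \<and> norm f - e \<le> f x"
  proof (rule ccontr)
    assume "\<nexists>x. norm x \<le> 1 \<and> norm f - e \<le> f x"
    then have small: "f x < norm f - e" if "norm x \<le> 1" for x
      using that by force
    have "0 \<le> norm f - e" using small[of 0] by simp
    have "norm (f x) \<le> (norm f - e) * norm x" for x
    proof (cases "x = 0")
      case False
      have "f (x /\<^sub>R norm x) < norm f - e" "- f (x /\<^sub>R norm x) < norm f - e"
        using small[of "x /\<^sub>R norm x"] small[of "- (x /\<^sub>R norm x)"] False
        by (auto simp: blinfun.minus_right)
      moreover have "f (x /\<^sub>R norm x) = f x / norm x"
        by (simp add: blinfun.scaleR_right divide_inverse mult.commute)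
      ultimately have "\<bar>f x\<bar> / norm x < norm f - e"
        by (simp add: abs_less_iff)
      then show ?thesis using False by (simp add: divide_less_eq less_imp_le)
    qed simp
    then have "norm f \<le> norm f - e" by (rule norm_blinfun_bound[OF \<open>0 \<le> norm f - e\<close>])
    then show False using assms by simp
  qed
  then show thesis using that by blast
qed

lemma Jset_eq_empty:
  fixes x :: "'v::real_normed_vector"
  assumes "norm x < 1"
  shows "Jset x = {}"
proof -
  have "f x < 1" if "norm f = 1" for f :: "'v::real_normed_vector \<Rightarrow>\<^sub>L real"
    using norm_blinfun[of f x] that assms by simp
  then show ?thesis by (force simp: Jset_def)
qed

lemma in_span_Jset_if_norming:
  fixes f :: "'v::real_normed_vector \<Rightarrow>\<^sub>L real"
  assumes "f x = norm f"
  shows "f \<in> span (Jset x)"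
proof (cases "f = 0")
  case False
  then have "f /\<^sub>R norm f \<in> Jset x"
    using assms by (simp add: Jset_def blinfun.scaleR_left)
  then have "norm f *\<^sub>R (f /\<^sub>R norm f) \<in> span (Jset x)"
    by (intro span_mul span_base)
  then show ?thesis using False by simp
qed (simp add: span_zero)

lemma blinfun_compose_in_Jset:
  fixes f :: "'w::real_normed_vector \<Rightarrow>\<^sub>L real" and L :: "'v::real_normed_vector \<Rightarrow>\<^sub>L 'w"
  assumes "norm L \<le> 1" and "norm x \<le> 1" and "f \<in> Jset (L x)"
  shows "f o\<^sub>L L \<in> Jset x"
proof -
  have "norm (f o\<^sub>L L) \<le> 1"
    using norm_blinfun_compose[of f L] assms(1,3) by (simp add: Jset_def)
  moreover have "1 \<le> norm (f o\<^sub>L L)"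
    using norm_blinfun[of "f o\<^sub>L L" x] assms(2,3) mult_left_le[of "norm x" "norm (f o\<^sub>L L)"]
    by (simp add: Jset_def)
  ultimately show ?thesis using assms(3) by (simp add: Jset_def)
qed

section \<open>Biorthogonal families of linear maps\<close>

locale biorthogonal_maps =
  fixes emb :: "'i \<Rightarrow> 'v::real_vector \<Rightarrow> 'w::real_vector" and prj :: "'i \<Rightarrow> 'w \<Rightarrow> 'v"
  assumes linear_emb: "linear (emb i)"
    and linear_prj: "linear (prj i)"
    and prj_emb: "prj i (emb j x) = (if i = j then x else 0)"
begin

lemma inj_emb: "inj (emb i)"
  by (rule injI) (metis prj_emb)

lemma independent_UN_emb:
  assumes indep: "\<And>i. i \<in> I \<Longrightarrow> independent (C i)"
  shows "independent (\<Union>i\<in>I. emb i ` C i)"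
  unfolding dependent_def
proof (intro notI, elim bexE)
  let ?D = "\<Union>i\<in>I. emb i ` C i"
  fix a assume "a \<in> ?D" and a: "a \<in> span (?D - {a})"
  then obtain i c where i: "i \<in> I" "c \<in> C i" and a_eq: "a = emb i c" by blast
  \<comment> \<open>Projecting to the i-th summand turns a dependence in D into one inside C i.\<close>
  have "prj i d \<in> insert 0 (C i - {c})" if "d \<in> ?D - {a}" for d
  proof -
    from that obtain j c' where "c' \<in> C j" "d = emb j c'" "d \<noteq> a" by blast
    then show ?thesis using a_eq by (cases "j = i") (auto simp: prj_emb)
  qed
  then have "prj i ` (?D - {a}) \<subseteq> insert 0 (C i - {c})" by blast
  then have "span (prj i ` (?D - {a})) \<subseteq> span (C i - {c})"
    by (metis span_insert_0 span_mono)
  moreover have "c = prj i a" using a_eq by (simp add: prj_emb)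
  then have "c \<in> span (prj i ` (?D - {a}))"
    using a by (simp add: span_linear_image[OF linear_prj])
  ultimately have "c \<in> span (C i - {c})" by blast
  then have "dependent (C i)"
    using i(2) by (auto simp only: dependent_def)
  then show False using indep[OF i(1)] by contradiction
qed

lemma span_UN_emb_eq:
  assumes "\<And>i. C i \<subseteq> A i" and "\<And>i. A i \<subseteq> span (C i)"
  shows "span (\<Union>i\<in>I. emb i ` C i) = span (\<Union>i\<in>I. emb i ` A i)"
proof -
  have "emb i ` A i \<subseteq> span (\<Union>i\<in>I. emb i ` C i)" if "i \<in> I" for i
  proof -
    have "emb i ` A i \<subseteq> span (emb i ` C i)"
      using assms(2)[of i] by (auto simp: span_linear_image[OF linear_emb])
    also have "\<dots> \<subseteq> span (\<Union>i\<in>I. emb i ` C i)" by (rule span_mono) (use that in blast)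
    finally show ?thesis .
  qed
  moreover have "(\<Union>i\<in>I. emb i ` C i) \<subseteq> span (\<Union>i\<in>I. emb i ` A i)"
    using assms(1) by (intro subset_trans[OF _ span_superset]) blast
  ultimately show ?thesis by (simp add: span_eq UN_least)
qed

lemma card_UN_emb:
  assumes "finite I" and "\<And>i. finite (C i)" and "\<And>i. 0 \<notin> C i"
  shows "card (\<Union>i\<in>I. emb i ` C i) = (\<Sum>i\<in>I. card (C i))"
proof -
  have "emb i c \<noteq> emb j c'" if "i \<noteq> j" "c \<in> C i" for i j c c'
  proof
    assume "emb i c = emb j c'"
    then have "c = 0" using prj_emb[of i i c] prj_emb[of i j c'] \<open>i \<noteq> j\<close> by simp
    with assms(3) \<open>c \<in> C i\<close> show False by blast
  qed
  then have "card (\<Union>i\<in>I. emb i ` C i) = (\<Sum>i\<in>I. card (emb i ` C i))"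
    by (intro card_UN_disjoint assms(1)) (auto simp: assms(2))
  also have "\<dots> = (\<Sum>i\<in>I. card (C i))"
    by (simp add: card_image inj_on_subset[OF inj_emb])
  finally show ?thesis .
qed

lemma dim_UN_emb:
  assumes "finite I" and "finite B" and "span B = (UNIV :: 'v set)"
  shows "dim (\<Union>i\<in>I. emb i ` A i) = (\<Sum>i\<in>I. dim (A i))"
proof -
  have "\<exists>C. C \<subseteq> A i \<and> independent C \<and> A i \<subseteq> span C \<and> card C = dim (A i)" for i
    by (meson basis_exists)
  then obtain C where C: "\<And>i. C i \<subseteq> A i" "\<And>i. independent (C i)" "\<And>i. A i \<subseteq> span (C i)"
    "\<And>i. card (C i) = dim (A i)"
    by metis
  have fin_C: "finite (C i)" for i
    using independent_span_bound[OF assms(2) C(2)] assms(3) by auto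
  have zero_C: "0 \<notin> C i" for i
    using C(2) dependent_zero by blast
  have "dim (\<Union>i\<in>I. emb i ` A i) = dim (span (\<Union>i\<in>I. emb i ` A i))"
    by (simp only: dim_span)
  also have "\<dots> = dim (\<Union>i\<in>I. emb i ` C i)"
    by (simp only: span_UN_emb_eq[OF C(1,3), symmetric] dim_span)
  also have "\<dots> = card (\<Union>i\<in>I. emb i ` C i)"
    by (rule dim_eq_card_independent[OF independent_UN_emb[OF C(2)]])
  also have "\<dots> = (\<Sum>i\<in>I. dim (A i))"
    by (simp add: card_UN_emb[OF assms(1) fin_C zero_C] C(4))
  finally show ?thesis .
qed

end

section \<open>Extreme points of the unit ball of ell_1^n\<close>

lemma lone_eq_iff: "(y::'n::finite lone) = z \<longleftrightarrow> (\<forall>i. Rep_lone y i = Rep_lone z i)"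
  by (metis Rep_lone_inject ext)

lemma norm_lone_eq_sum: "norm (y::'n::finite lone) = (\<Sum>i\<in>UNIV. \<bar>Rep_lone y i\<bar>)"
  by (simp add: norm_lone.rep_eq)

lemma abs_Rep_lone_le_norm: "\<bar>Rep_lone y i\<bar> \<le> norm (y::'n::finite lone)"
  unfolding norm_lone_eq_sum by (rule member_le_sum) auto

lemma bounded_linear_Rep_lone: "bounded_linear (\<lambda>y::'n::finite lone. Rep_lone y i)"
  by (rule bounded_linear_intro[where K=1])
     (auto simp: plus_lone.rep_eq scaleR_lone.rep_eq abs_Rep_lone_le_norm)

lemma Rep_unit_vec [simp]: "Rep_lone (unit_vec i) j = (if j = i then 1 else 0)"
  by (simp add: unit_vec.rep_eq)

lemma norm_unit_vec [simp]: "norm (unit_vec i :: 'n::finite lone) = 1"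
  by (simp add: norm_lone_eq_sum)

lemma scaleR_unit_vec_eq_iff:
  "s \<noteq> 0 \<Longrightarrow> s *\<^sub>R unit_vec i = t *\<^sub>R (unit_vec j :: 'n::finite lone) \<longleftrightarrow> s = t \<and> i = j"
  by (auto simp: lone_eq_iff scaleR_lone.rep_eq)

lemma lone_eq_scaleR_unit_vec:
  fixes y :: "'n::finite lone"
  assumes "norm y \<le> 1" and "\<bar>Rep_lone y i\<bar> = 1"
  shows "y = Rep_lone y i *\<^sub>R unit_vec i"
proof -
  have "\<bar>Rep_lone y i\<bar> + \<bar>Rep_lone y j\<bar> \<le> 1" if "j \<noteq> i" for j
  proof -
    have "(\<Sum>k\<in>{i, j}. \<bar>Rep_lone y k\<bar>) \<le> (\<Sum>k\<in>UNIV. \<bar>Rep_lone y k\<bar>)"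
      by (rule sum_mono2) auto
    then show ?thesis using assms that by (simp add: norm_lone_eq_sum)
  qed
  then show ?thesis
    using assms(2) by (auto simp: lone_eq_iff scaleR_lone.rep_eq)
qed

lemma signed_unit_vec_extreme_point:
  assumes "s \<in> {-1, 1}"
  shows "(s *\<^sub>R unit_vec i :: 'n::finite lone) extreme_point_of cball 0 1"
  unfolding extreme_point_of_def
proof (intro conjI ballI notI)
  show "s *\<^sub>R unit_vec i \<in> cball (0::'n lone) 1" using assms by auto
  fix a b :: "'n lone"
  assume "a \<in> cball 0 1" "b \<in> cball 0 1" and "s *\<^sub>R unit_vec i \<in> open_segment a b"
  then obtain u where a: "norm a \<le> 1" and b: "norm b \<le> 1" and "a \<noteq> b" "0 < u" "u < 1"
    and u: "s *\<^sub>R unit_vec i = (1 - u) *\<^sub>R a + u *\<^sub>R b"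
    by (auto simp: in_segment)
  define p q where "p = s * Rep_lone a i" and "q = s * Rep_lone b i"
  have "s * Rep_lone (s *\<^sub>R unit_vec i) i = (1 - u) * p + u * q"
    unfolding u by (simp add: p_def q_def plus_lone.rep_eq scaleR_lone.rep_eq minus_lone.rep_eq algebra_simps)
  then have sum1: "(1 - u) * p + u * q = 1"
    using assms by (auto simp: scaleR_lone.rep_eq)
  have "p \<le> 1" "q \<le> 1"
    using assms abs_Rep_lone_le_norm[of a i] abs_Rep_lone_le_norm[of b i] a b
    by (auto simp: p_def q_def abs_le_iff)
  moreover have "(1 - u) * (1 - p) + u * (1 - q) = 0"
    using sum1 by (simp add: algebra_simps)
  ultimately have "(1 - u) * (1 - p) = 0" "u * (1 - q) = 0"
    using \<open>0 < u\<close> \<open>u < 1\<close> by (smt (verit) mult_nonneg_nonneg)+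
  then have "p = 1" "q = 1"
    using \<open>0 < u\<close> \<open>u < 1\<close> by auto
  then have "Rep_lone a i = s" "Rep_lone b i = s"
    using assms by (auto simp: p_def q_def)
  then have "a = s *\<^sub>R unit_vec i" "b = s *\<^sub>R unit_vec i"
    using lone_eq_scaleR_unit_vec[OF a, of i] lone_eq_scaleR_unit_vec[OF b, of i] assms by auto
  with \<open>a \<noteq> b\<close> show False by simp
qed

lemma zero_not_extreme_point_cball:
  fixes e :: "'v::real_normed_vector"
  assumes "e \<noteq> 0"
  shows "\<not> (0::'v) extreme_point_of cball 0 1"
proof
  define u where "u = e /\<^sub>R norm e"
  have "norm u = 1" using assms by (simp add: u_def)
  then have "norm (u + u) = 2" by (simp flip: scaleR_2)
  then have "u \<noteq> - u" by (metis right_minus norm_zero zero_neq_numeral)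
  with \<open>norm u = 1\<close> have "0 \<in> open_segment u (- u)" and "u \<in> cball 0 1" "- u \<in> cball 0 1"
    unfolding in_segment by (auto intro!: exI[of _ "1/2"])
  moreover assume "(0::'v) extreme_point_of cball 0 1"
  ultimately show False
    unfolding extreme_point_of_def by blast
qed

lemma extreme_point_lone_coord:
  fixes y :: "'n::finite lone"
  assumes ext: "y extreme_point_of cball 0 1" and yj: "Rep_lone y j \<noteq> 0"
  shows "\<bar>Rep_lone y j\<bar> = 1"
proof (rule ccontr)
  have "norm y \<le> 1" using ext by (auto simp: extreme_point_of_def)
  assume "\<bar>Rep_lone y j\<bar> \<noteq> 1"
  define c where "c = \<bar>Rep_lone y j\<bar>"
  have c: "0 < c" "c < 1"
    using yj \<open>\<bar>Rep_lone y j\<bar> \<noteq> 1\<close> abs_Rep_lone_le_norm[of y j] \<open>norm y \<le> 1\<close> by (auto simp: c_def)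
  \<comment> \<open>Split off the j-th coordinate: y lies strictly between a vertex and a point of the ball.\<close>
  define a where "a = sgn (Rep_lone y j) *\<^sub>R unit_vec j"
  define z where "z = (1 / (1 - c)) *\<^sub>R (y - Rep_lone y j *\<^sub>R unit_vec j)"
  have "c * sgn (Rep_lone y j) = Rep_lone y j"
    by (simp add: c_def abs_mult_sgn)
  then have "y = (1 - c) *\<^sub>R z + c *\<^sub>R a"
    using c by (auto simp: lone_eq_iff z_def a_def plus_lone.rep_eq scaleR_lone.rep_eq minus_lone.rep_eq)
  moreover have "z \<noteq> a"
    using yj by (auto simp: lone_eq_iff z_def a_def scaleR_lone.rep_eq minus_lone.rep_eq sgn_if)
  ultimately have "y \<in> open_segment z a"
    using c unfolding in_segment by auto
  moreover have "norm a \<le> 1" using yj by (simp add: a_def)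
  moreover have "norm z \<le> 1"
  proof -
    have "\<bar>Rep_lone (y - Rep_lone y j *\<^sub>R unit_vec j) k\<bar> = \<bar>Rep_lone y k\<bar> - (if k = j then c else 0)"
      for k by (auto simp: minus_lone.rep_eq scaleR_lone.rep_eq c_def)
    then have "norm (y - Rep_lone y j *\<^sub>R unit_vec j) = norm y - c"
      by (simp add: norm_lone_eq_sum sum_subtractf)
    then show ?thesis using c \<open>norm y \<le> 1\<close> by (simp add: z_def divide_le_eq_1)
  qed
  ultimately show False using ext unfolding extreme_point_of_def by auto
qed

lemma extreme_point_lone_has_unit_coord:
  fixes y :: "'n::finite lone"
  assumes ext: "y extreme_point_of cball 0 1"
  obtains i where "\<bar>Rep_lone y i\<bar> = 1"
proof -
  have "unit_vec undefined \<noteq> (0 :: 'n lone)"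
    using norm_unit_vec[of undefined] by (metis norm_zero zero_neq_one)
  then have "y \<noteq> 0"
    using ext zero_not_extreme_point_cball by blast
  then obtain j where "Rep_lone y j \<noteq> 0" by (auto simp: lone_eq_iff zero_lone.rep_eq)
  then show thesis using that extreme_point_lone_coord[OF ext] by blast
qed

lemma extreme_point_of_lone_ball_iff:
  "(y::'n::finite lone) extreme_point_of cball 0 1 \<longleftrightarrow> (\<exists>s i. s \<in> {-1, 1} \<and> y = s *\<^sub>R unit_vec i)"
proof
  assume ext: "y extreme_point_of cball 0 1"
  have "norm y \<le> 1" using ext by (auto simp: extreme_point_of_def)
  moreover obtain i where i: "\<bar>Rep_lone y i\<bar> = 1" using ext by (rule extreme_point_lone_has_unit_coord)
  ultimately have "y = Rep_lone y i *\<^sub>R unit_vec i" by (rule lone_eq_scaleR_unit_vec)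
  moreover have "Rep_lone y i \<in> {-1, 1}" using i by (auto simp: abs_if split: if_splits)
  ultimately show "\<exists>s i. s \<in> {-1, 1} \<and> y = s *\<^sub>R unit_vec i" by blast
qed (auto intro: signed_unit_vec_extreme_point)

lemma signed_unit_vecs_eq_iff:
  "{s *\<^sub>R unit_vec i | s i. s \<in> {-1, 1} \<and> i \<in> S} = {s *\<^sub>R unit_vec i | s i. s \<in> {-1, 1} \<and> i \<in> S'}
    \<longleftrightarrow> S = (S' :: 'n::finite set)"
proof
  have mem: "unit_vec i \<in> {s *\<^sub>R unit_vec j | s j. s \<in> {-1, 1} \<and> j \<in> R} \<longleftrightarrow> i \<in> R" for i R
    using scaleR_unit_vec_eq_iff[of 1 i] by force
  assume eq: "{s *\<^sub>R unit_vec i | s i. s \<in> {-1, 1} \<and> i \<in> S} = {s *\<^sub>R unit_vec i | s i. s \<in> {-1, 1} \<and> i \<in> S'}"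
  show "S = S'"
  proof (rule set_eqI)
    show "i \<in> S \<longleftrightarrow> i \<in> S'" for i
      using mem[of i S] mem[of i S'] unfolding eq by blast
  qed
qed simp

section \<open>Rows of operators into ell_infinity^n\<close>

lemma linf_eq_iff: "(x::'n::finite linf) = y \<longleftrightarrow> (\<forall>i. Rep_linf x i = Rep_linf y i)"
  by (metis Rep_linf_inject ext)

lemma Rep_linf_sum: "Rep_linf (sum f S) j = (\<Sum>i\<in>S. Rep_linf (f i) j)"
  by (induction S rule: infinite_finite_induct) (auto simp: zero_linf.rep_eq plus_linf.rep_eq)

lemma abs_Rep_linf_le_norm: "\<bar>Rep_linf x i\<bar> \<le> norm (x::'n::finite linf)"
  unfolding norm_linf.rep_eq by (rule Max_ge) auto

lemma norm_linf_le: "(\<And>i. \<bar>Rep_linf x i\<bar> \<le> c) \<Longrightarrow> norm (x::'n::finite linf) \<le> c"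
  unfolding norm_linf.rep_eq by (rule Max.boundedI) auto

lift_definition linf_coord :: "'n::finite \<Rightarrow> 'n linf \<Rightarrow>\<^sub>L real" is "\<lambda>i z. Rep_linf z i"
  by (rule bounded_linear_intro[where K=1])
     (auto simp: plus_linf.rep_eq scaleR_linf.rep_eq abs_Rep_linf_le_norm)

lift_definition linf_unit :: "'n::finite \<Rightarrow> 'n linf" is "\<lambda>i j. if j = i then 1 else 0" .

lift_definition op_row :: "'n::finite \<Rightarrow> ('a::real_normed_vector \<Rightarrow>\<^sub>L 'n linf) \<Rightarrow>\<^sub>L ('a \<Rightarrow>\<^sub>L real)"
  is "\<lambda>i T. linf_coord i o\<^sub>L T"
  by (rule bounded_bilinear.bounded_linear_right[OF bounded_bilinear_blinfun_compose])

lift_definition embed_row :: "'n::finite \<Rightarrow> ('a::real_normed_vector \<Rightarrow>\<^sub>L real) \<Rightarrow>\<^sub>L ('a \<Rightarrow>\<^sub>L 'n linf)"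
  is "\<lambda>i g. blinfun_scaleR_left (linf_unit i) o\<^sub>L g"
  by (rule bounded_bilinear.bounded_linear_right[OF bounded_bilinear_blinfun_compose])

lemma op_row_apply [simp]: "op_row i T x = Rep_linf (T x) i"
  by (simp add: op_row.rep_eq linf_coord.rep_eq)

lemma Rep_embed_row_apply [simp]: "Rep_linf (embed_row i g x) j = (if j = i then g x else 0)"
  by (simp add: embed_row.rep_eq scaleR_linf.rep_eq linf_unit.rep_eq)

lemma norm_op_row_le: "norm (op_row i T) \<le> norm T"
  by (rule norm_blinfun_bound) (auto intro: order_trans[OF abs_Rep_linf_le_norm] norm_blinfun)

lemma norm_op_row_blinfun_le: "norm (op_row i :: ('a::real_normed_vector \<Rightarrow>\<^sub>L 'n::finite linf) \<Rightarrow>\<^sub>L _) \<le> 1"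
  by (rule norm_blinfun_bound) (auto simp: norm_op_row_le)

lemma op_row_embed_row: "op_row i (embed_row j g) = (if i = j then g else 0)"
  by (rule blinfun_eqI) simp

lemma sum_embed_row_op_row: "(\<Sum>i\<in>UNIV. embed_row i (op_row i T)) = T"
  by (rule blinfun_eqI) (simp add: linf_eq_iff blinfun.sum_left Rep_linf_sum)

lemma norm_sum_embed_row_le:
  assumes "\<And>i. norm (g i) \<le> c"
  shows "norm (\<Sum>i\<in>UNIV. embed_row i (g i) :: 'a::real_normed_vector \<Rightarrow>\<^sub>L 'n::finite linf) \<le> c"
proof (rule norm_blinfun_bound)
  show "0 \<le> c" using assms[of undefined] norm_ge_zero order_trans by blast
  fix x
  show "norm ((\<Sum>i\<in>UNIV. embed_row i (g i)) x) \<le> c * norm x"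
  proof (rule norm_linf_le)
    fix j
    have "\<bar>Rep_linf ((\<Sum>i\<in>UNIV. embed_row i (g i)) x) j\<bar> = \<bar>g j x\<bar>"
      by (simp add: blinfun.sum_left Rep_linf_sum)
    also have "\<dots> \<le> norm (g j) * norm x" using norm_blinfun[of "g j" x] by simp
    also have "\<dots> \<le> c * norm x" by (rule mult_right_mono[OF assms]) simp
    finally show "\<bar>Rep_linf ((\<Sum>i\<in>UNIV. embed_row i (g i)) x) j\<bar> \<le> c * norm x" .
  qed
qed

lemma norm_eq_Max_norm_op_row:
  fixes T :: "'a::real_normed_vector \<Rightarrow>\<^sub>L 'n::finite linf"
  shows "norm T = Max (range (\<lambda>i. norm (op_row i T)))"
proof (rule antisym)
  show "norm T \<le> Max (range (\<lambda>i. norm (op_row i T)))"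
    using norm_sum_embed_row_le[of "\<lambda>i. op_row i T" "Max (range (\<lambda>i. norm (op_row i T)))"]
    by (simp add: sum_embed_row_op_row)
  show "Max (range (\<lambda>i. norm (op_row i T))) \<le> norm T"
    by (auto intro: Max.boundedI norm_op_row_le)
qed

lemma exists_op_row_norm_eq: "\<exists>i. norm (op_row i T) = norm T"
proof -
  have "Max (range (\<lambda>i. norm (op_row i T))) \<in> range (\<lambda>i. norm (op_row i T))"
    by (rule Max_in) auto
  then obtain i where "Max (range (\<lambda>i. norm (op_row i T))) = norm (op_row i T)" by blast
  then show ?thesis using norm_eq_Max_norm_op_row[of T] by metis
qed

lemma adjoint_op_eq_sum_op_row: "adjoint_op T y = (\<Sum>i\<in>UNIV. Rep_lone y i *\<^sub>R op_row i T)"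
proof -
  have "(\<lambda>x. pairing y (T x)) = (\<Sum>i\<in>UNIV. Rep_lone y i *\<^sub>R op_row i T)" for y
    by (simp add: fun_eq_iff pairing.rep_eq blinfun.sum_left blinfun.scaleR_left)
  then have row_sum: "Blinfun (\<lambda>x. pairing y (T x)) = (\<Sum>i\<in>UNIV. Rep_lone y i *\<^sub>R op_row i T)" for y
    by (simp add: blinfun_apply_inverse)
  have "bounded_linear (\<lambda>y. \<Sum>i\<in>UNIV. Rep_lone y i *\<^sub>R op_row i T)"
    by (intro bounded_linear_sum bounded_linear_scaleR_left bounded_linear_compose[OF _ bounded_linear_Rep_lone])
  then show ?thesis
    by (simp add: adjoint_op_def row_sum bounded_linear_Blinfun_apply)
qed

lemma adjoint_op_unit_vec [simp]: "adjoint_op T (unit_vec i) = op_row i T"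
proof -
  have "(\<Sum>j\<in>UNIV. (if j = i then 1 else 0) *\<^sub>R op_row j T) = (\<Sum>j\<in>UNIV. if j = i then op_row j T else 0)"
    by (rule sum.cong) auto
  then show ?thesis by (simp add: adjoint_op_eq_sum_op_row)
qed

lemma norm_adjoint_op: "norm (adjoint_op T) = norm T"
proof (rule antisym)
  show "norm (adjoint_op T) \<le> norm T"
  proof (rule norm_blinfun_bound)
    fix y
    have "norm (adjoint_op T y) \<le> (\<Sum>i\<in>UNIV. \<bar>Rep_lone y i\<bar> * norm (op_row i T))"
      unfolding adjoint_op_eq_sum_op_row by (rule order_trans[OF norm_sum]) simp
    also have "\<dots> \<le> (\<Sum>i\<in>UNIV. \<bar>Rep_lone y i\<bar> * norm T)"
      by (intro sum_mono mult_left_mono norm_op_row_le) simp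
    finally show "norm (adjoint_op T y) \<le> norm T * norm y"
      by (simp add: norm_lone_eq_sum sum_distrib_left mult.commute)
  qed simp
  obtain i where "norm (op_row i T) = norm T" using exists_op_row_norm_eq by blast
  then show "norm T \<le> norm (adjoint_op T)"
    using norm_blinfun[of "adjoint_op T" "unit_vec i"] by simp
qed

lemma M_set_adjoint_op_Int_extreme_points:
  fixes T :: "'a::real_normed_vector \<Rightarrow>\<^sub>L 'n::finite linf"
  shows "M_set (adjoint_op T) \<inter> {y. y extreme_point_of cball 0 1}
    = {s *\<^sub>R unit_vec i | s i. s \<in> {-1, 1} \<and> norm (op_row i T) = norm T}"
proof -
  have norms: "norm (s *\<^sub>R unit_vec i :: 'n lone) = 1"
    "norm (adjoint_op T (s *\<^sub>R unit_vec i)) = norm (op_row i T)" if "s \<in> {-1, 1}" for s i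
    using that by (auto simp: blinfun.scaleR_right)
  show ?thesis
  proof (intro set_eqI iffI)
    fix y assume "y \<in> M_set (adjoint_op T) \<inter> {y. y extreme_point_of cball 0 1}"
    then obtain s i where "s \<in> {-1, 1}" "y = s *\<^sub>R unit_vec i" "norm (adjoint_op T y) = norm T"
      by (auto simp: M_set_def norm_adjoint_op extreme_point_of_lone_ball_iff)
    with norms show "y \<in> {s *\<^sub>R unit_vec i | s i. s \<in> {-1, 1} \<and> norm (op_row i T) = norm T}"
      by auto
  next
    fix y assume "y \<in> {s *\<^sub>R unit_vec i | s i. s \<in> {-1, 1} \<and> norm (op_row i T) = norm T}"
    then obtain s i where "s \<in> {-1, 1}" "y = s *\<^sub>R unit_vec i" "norm (op_row i T) = norm T"
      by blast
    with norms show "y \<in> M_set (adjoint_op T) \<inter> {y. y extreme_point_of cball 0 1}"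
      by (simp add: M_set_def norm_adjoint_op signed_unit_vec_extreme_point)
  qed
qed

section \<open>Support functionals of operators into ell_infinity^n\<close>

lemma blinfun_eq_sum_compose_rows:
  fixes \<Psi> :: "('a::real_normed_vector \<Rightarrow>\<^sub>L 'n::finite linf) \<Rightarrow>\<^sub>L real"
  shows "\<Psi> = (\<Sum>i\<in>UNIV. (\<Psi> o\<^sub>L embed_row i) o\<^sub>L op_row i)"
proof (rule blinfun_eqI)
  fix T
  have "\<Psi> T = \<Psi> (\<Sum>i\<in>UNIV. embed_row i (op_row i T))" by (simp add: sum_embed_row_op_row)
  then show "\<Psi> T = (\<Sum>i\<in>UNIV. (\<Psi> o\<^sub>L embed_row i) o\<^sub>L op_row i) T"
    by (simp add: blinfun.sum_left blinfun.sum_right)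
qed

lemma sum_norm_compose_embed_row_le:
  fixes \<Psi> :: "('a::real_normed_vector \<Rightarrow>\<^sub>L 'n::finite linf) \<Rightarrow>\<^sub>L real"
  shows "(\<Sum>i\<in>UNIV. norm (\<Psi> o\<^sub>L embed_row i)) \<le> norm \<Psi>"
proof (rule field_le_epsilon)
  fix e :: real assume "0 < e"
  define e' where "e' = e / CARD('n)"
  have "0 < e'" using \<open>0 < e\<close> by (simp add: e'_def)
  then have "\<exists>g. norm g \<le> 1 \<and> norm (\<Psi> o\<^sub>L embed_row i) - e' \<le> (\<Psi> o\<^sub>L embed_row i) g" for i
    by (meson exists_almost_norming)
  then obtain g where g: "\<And>i. norm (g i) \<le> 1"
    and g_norming: "\<And>i. norm (\<Psi> o\<^sub>L embed_row i) - e' \<le> \<Psi> (embed_row i (g i))"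
    by (metis blinfun_apply_blinfun_compose)
  have "(\<Sum>i\<in>UNIV. norm (\<Psi> o\<^sub>L embed_row i)) \<le> (\<Sum>i\<in>UNIV. \<Psi> (embed_row i (g i)) + e')"
    using g_norming by (intro sum_mono) (simp add: algebra_simps)
  also have "\<dots> = \<Psi> (\<Sum>i\<in>UNIV. embed_row i (g i)) + e"
    by (simp add: sum.distrib e'_def blinfun.sum_right)
  also have "\<Psi> (\<Sum>i\<in>UNIV. embed_row i (g i)) \<le> norm \<Psi> * norm (\<Sum>i\<in>UNIV. embed_row i (g i))"
    using norm_blinfun[of \<Psi>] by (simp add: abs_le_iff)
  also have "\<dots> \<le> norm \<Psi>"
    using norm_sum_embed_row_le[of g 1, OF g] by (simp add: mult_left_le)
  finally show "(\<Sum>i\<in>UNIV. norm (\<Psi> o\<^sub>L embed_row i)) \<le> norm \<Psi> + e" by simp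
qed

lemma compose_embed_row_in_span_Jset:
  fixes T :: "'a::real_normed_vector \<Rightarrow>\<^sub>L 'n::finite linf"
  assumes "norm T = 1" and "\<Psi> \<in> Jset T"
  shows "\<Psi> o\<^sub>L embed_row i \<in> span (Jset (op_row i T))"
proof -
  define \<phi> where "\<phi> j = \<Psi> o\<^sub>L embed_row j" for j
  have le: "\<phi> j (op_row j T) \<le> norm (\<phi> j)" for j
    using norm_blinfun[of "\<phi> j" "op_row j T"] norm_op_row_le[of j T] assms(1)
      mult_left_le[of "norm (op_row j T)" "norm (\<phi> j)"]
    by (simp add: abs_le_iff)
  \<comment> \<open>Sandwich: the values at the rows of T sum to 1, their norms to at most 1.\<close>
  have "(\<Sum>j\<in>UNIV. \<phi> j (op_row j T)) = (\<Sum>j\<in>UNIV. (\<Psi> o\<^sub>L embed_row j) o\<^sub>L op_row j) T"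
    by (simp add: \<phi>_def blinfun.sum_left)
  also have "\<dots> = \<Psi> T"
    by (rule arg_cong[where f="\<lambda>F. blinfun_apply F T", OF blinfun_eq_sum_compose_rows[symmetric]])
  also have "\<dots> = norm \<Psi>" using assms(2) by (simp add: Jset_def)
  finally have "(\<Sum>j\<in>UNIV. norm (\<phi> j) - \<phi> j (op_row j T)) \<le> 0"
    using sum_norm_compose_embed_row_le[of \<Psi>] by (simp add: \<phi>_def sum_subtractf)
  then have "norm (\<phi> i) - \<phi> i (op_row i T) = 0"
    using le sum_nonneg_eq_0_iff[of UNIV "\<lambda>j. norm (\<phi> j) - \<phi> j (op_row j T)"]
    by (simp add: antisym sum_nonneg)
  then show ?thesis
    unfolding \<phi>_def[symmetric] by (intro in_span_Jset_if_norming) simp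
qed

lemma span_Jset_eq_span_UN_op_row:
  fixes T :: "'a::real_normed_vector \<Rightarrow>\<^sub>L 'n::finite linf"
  assumes "norm T = 1"
  shows "span (Jset T) = span (\<Union>i. (\<lambda>\<phi>. \<phi> o\<^sub>L op_row i) ` Jset (op_row i T))"
  unfolding span_eq
proof
  show "Jset T \<subseteq> span (\<Union>i. (\<lambda>\<phi>. \<phi> o\<^sub>L op_row i) ` Jset (op_row i T))"
  proof
    fix \<Psi> assume "\<Psi> \<in> Jset T"
    have "(\<Psi> o\<^sub>L embed_row i) o\<^sub>L op_row i \<in> span (\<Union>i. (\<lambda>\<phi>. \<phi> o\<^sub>L op_row i) ` Jset (op_row i T))"
      for i
    proof -
      have "(\<Psi> o\<^sub>L embed_row i) o\<^sub>L op_row i \<in> span ((\<lambda>\<phi>. \<phi> o\<^sub>L op_row i) ` Jset (op_row i T))"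
        using compose_embed_row_in_span_Jset[OF assms \<open>\<Psi> \<in> Jset T\<close>, of i]
        by (simp add: span_linear_image[OF linear_blinfun_compose_left])
      also have "\<dots> \<subseteq> span (\<Union>i. (\<lambda>\<phi>. \<phi> o\<^sub>L op_row i) ` Jset (op_row i T))"
        by (rule span_mono) blast
      finally show ?thesis .
    qed
    then show "\<Psi> \<in> span (\<Union>i. (\<lambda>\<phi>. \<phi> o\<^sub>L op_row i) ` Jset (op_row i T))"
      by (subst blinfun_eq_sum_compose_rows) (rule span_sum)
  qed
  show "(\<Union>i. (\<lambda>\<phi>. \<phi> o\<^sub>L op_row i) ` Jset (op_row i T)) \<subseteq> span (Jset T)"
    using blinfun_compose_in_Jset[OF norm_op_row_blinfun_le, where x=T] assms
    by (auto intro!: span_base)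
qed

lemma dim_Jset_eq_sum_op_row:
  fixes T :: "'a::real_normed_vector \<Rightarrow>\<^sub>L 'n::finite linf"
  assumes "\<exists>B. finite B \<and> span B = (UNIV :: 'a set)" and "norm T = 1"
  shows "dim (Jset T) = (\<Sum>i\<in>UNIV. dim (Jset (op_row i T)))"
proof -
  interpret biorthogonal_maps "\<lambda>i \<phi>. \<phi> o\<^sub>L op_row i" "\<lambda>i (\<Psi> :: ('a \<Rightarrow>\<^sub>L 'n linf) \<Rightarrow>\<^sub>L real). \<Psi> o\<^sub>L embed_row i"
    by (intro biorthogonal_maps.intro linear_blinfun_compose_left blinfun_eqI)
      (simp add: op_row_embed_row)
  let ?U = "\<Union>i. (\<lambda>\<phi>. \<phi> o\<^sub>L op_row i) ` Jset (op_row i T)"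
  obtain C where "finite C" and "span C = (UNIV :: (('a \<Rightarrow>\<^sub>L real) \<Rightarrow>\<^sub>L real) set)"
    using assms(1) finite_dimensional_dual by metis
  have "dim (Jset T) = dim (span (Jset T))" by (simp only: dim_span)
  also have "\<dots> = dim ?U" by (simp only: span_Jset_eq_span_UN_op_row[OF assms(2)] dim_span)
  also have "\<dots> = (\<Sum>i\<in>UNIV. dim (Jset (op_row i T)))"
    by (rule dim_UN_emb[OF finite \<open>finite C\<close> \<open>span C = UNIV\<close>])
  finally show ?thesis .
qed

lemma k_smooth_iff_sum_dim_Jset_op_row:
  fixes T :: "'a::real_normed_vector \<Rightarrow>\<^sub>L 'n::finite linf"
  assumes "\<exists>B. finite B \<and> span B = (UNIV :: 'a set)" and "norm T = 1"
  shows "k_smooth T k \<longleftrightarrow> (\<Sum>i | norm (op_row i T) = 1. dim (Jset (op_row i T))) = k"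
proof -
  have "dim (Jset T) = (\<Sum>i\<in>UNIV. dim (Jset (op_row i T)))"
    by (rule dim_Jset_eq_sum_op_row[OF assms])
  also have "\<dots> = (\<Sum>i | norm (op_row i T) = 1. dim (Jset (op_row i T)))"
  proof (rule sum.mono_neutral_right)
    have "Jset (op_row i T) = {}" if "norm (op_row i T) \<noteq> 1" for i
      using that norm_op_row_le[of i T] assms(2) by (intro Jset_eq_empty) simp
    then show "\<forall>i\<in>UNIV - {i. norm (op_row i T) = 1}. dim (Jset (op_row i T)) = 0"
      by (simp add: dim_eq_card_independent[OF independent_empty])
  qed simp_all
  finally show ?thesis by (simp add: k_smooth_def assms(2))
qed

theorem corollary3p8:
  fixes T :: "'a::real_normed_vector \<Rightarrow>\<^sub>L 'n::finite linf" and k :: nat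
  assumes "\<exists>B. finite B \<and> span B = (UNIV :: 'a set)"
    and "norm T = 1"
  shows "k_smooth T k \<longleftrightarrow>
    (\<exists>S :: 'n set. \<exists>m :: 'n \<Rightarrow> nat.
        S \<noteq> {} \<and>
        M_set (adjoint_op T) \<inter> {y. y extreme_point_of cball 0 1}
          = {s *\<^sub>R unit_vec i | s i. s \<in> {-1, 1} \<and> i \<in> S} \<and>
        (\<forall>i\<in>S. k_smooth (blinfun_apply (adjoint_op T) (unit_vec i)) (m i)) \<and>
        (\<Sum>i\<in>S. m i) = k)"
proof -
  define S\<^sub>T where "S\<^sub>T = {i. norm (op_row i T) = 1}"
  have "S\<^sub>T \<noteq> {}"
    using exists_op_row_norm_eq[of T] assms(2) by (auto simp: S\<^sub>T_def)
  have ext_iff: "M_set (adjoint_op T) \<inter> {y. y extreme_point_of cball 0 1}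
      = {s *\<^sub>R unit_vec i | s i. s \<in> {-1, 1} \<and> i \<in> S} \<longleftrightarrow> S = S\<^sub>T" for S
    using M_set_adjoint_op_Int_extreme_points[of T] signed_unit_vecs_eq_iff[of S\<^sub>T S] assms(2)
    by (auto simp: S\<^sub>T_def)
  have smooth_row: "k_smooth (adjoint_op T (unit_vec i)) m \<longleftrightarrow> i \<in> S\<^sub>T \<and> dim (Jset (op_row i T)) = m"
    for i m by (simp add: k_smooth_def S\<^sub>T_def)
  have "(\<exists>m. (\<forall>i\<in>S\<^sub>T. dim (Jset (op_row i T)) = m i) \<and> sum m S\<^sub>T = k)
      \<longleftrightarrow> (\<Sum>i\<in>S\<^sub>T. dim (Jset (op_row i T))) = k"
    by (auto cong: sum.cong)
  then show ?thesis
    unfolding ext_iff smooth_row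
    using k_smooth_iff_sum_dim_Jset_op_row[OF assms, of k, folded S\<^sub>T_def] \<open>S\<^sub>T \<noteq> {}\<close>
    by auto
qed

end
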